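(* Let $n\ge2$ and $q_1,q_2\in\mathbb{C}$ with $q_1q_2\ne0$, put $q=-q_2/q_1$, and assume $[n]_q=1+q+\cdots+q^{n-1}\ne0$. Then the algebra $\operatorname{End}_{B_n}(\mathbf{E})$ of linear endomorphisms of $\mathbf{E}$ commuting with the generalized Burau action of $B_n$ is spanned by the identity operator $\mathrm{id}_{\mathbf{E}}$ and the operator $P$ whose matrix with respect to $e_1,\dots,e_n$ is the $n\times n$ matrix all of whose rows equal $(1,q,q^2,\dots,q^{n-1})$.
   Context: Artin's braid group $B_n$ has generators $\sigma_1,\dots,\sigma_{n-1}$ with relations $\sigma_i\sigma_{i+1}\sigma_i=\sigma_{i+1}\sigma_i\sigma_{i+1}$, $\sigma_i\sigma_j=\sigma_j\sigma_i$ ($|i-j|>1$). $\mathbf{E}=\mathbb{C}^n$ with basis $e_1,\dots,e_n$; the generalized Burau representation is $\sigma_ie_j=q_1e_j$ ($j\ne i,i+1$), $\sigma_ie_{i+1}=-q_2e_i$, $\sigma_ie_i=(q_1+q_2)e_i+q_1e_{i+1}$. *)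

theory Defs
  imports Complex_Main "Jordan_Normal_Form.Matrix"
begin

text \<open>Indices are 0-based: basis vectors e_0..e_(n-1), generators sigma_0..sigma_(n-2)
  (paper: e_1..e_n, sigma_1..sigma_(n-1)).  Entry (r,c) of the matrix of sigma_i is
  the coefficient of e_r in sigma_i e_c.\<close>

definition burau_gen :: "nat \<Rightarrow> complex \<Rightarrow> complex \<Rightarrow> nat \<Rightarrow> complex mat" where
  "burau_gen n q1 q2 i = mat n n (\<lambda>(r, c).
     if c = i then (if r = i then q1 + q2 else if r = i + 1 then q1 else 0)
     else if c = i + 1 then (if r = i then - q2 else 0)
     else (if r = c then q1 else 0))"

definition End_Bn :: "nat \<Rightarrow> complex \<Rightarrow> complex \<Rightarrow> complex mat set" where
  "End_Bn n q1 q2 = {A \<in> carrier_mat n n.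
     \<forall>i < n - 1. A * burau_gen n q1 q2 i = burau_gen n q1 q2 i * A}"

definition P_mat :: "nat \<Rightarrow> complex \<Rightarrow> complex mat" where
  "P_mat n q = mat n n (\<lambda>(r, c). q ^ c)"

end

theory Submission
  imports Defs
begin

text \<open>Each generator is q1 times the identity plus a rank-one matrix supported on rows and
  columns i, i+1, so commuting with it only relates entries of A in those rows and columns.
  Off the diagonal this makes every column of A constant and multiplies the entries of a row by
  q when passing from column i to column i+1, so the off-diagonal part of A is that of a multiple
  b P; on the diagonal it makes A(c,c) - b q^c independent of c.  Conversely P is the product of
  the all-ones column and the row (q^k), which are right and left eigenvectors of every generator
  for the eigenvalue q1, so P sigma_i = q1 P = sigma_i P.\<close>

lemma dim_burau_gen [simp]:
  "dim_row (burau_gen n q1 q2 i) = n" "dim_col (burau_gen n q1 q2 i) = n"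
  by (simp_all add: burau_gen_def)

lemma burau_gen_carrier [simp]: "burau_gen n q1 q2 i \<in> carrier_mat n n"
  by (simp add: burau_gen_def)

lemma dim_P_mat [simp]: "dim_row (P_mat n q) = n" "dim_col (P_mat n q) = n"
  by (simp_all add: P_mat_def)

lemma P_mat_carrier [simp]: "P_mat n q \<in> carrier_mat n n"
  by (simp add: P_mat_def)

lemma col_burau_gen:
  assumes "i + 1 < n" and "c < n"
  shows "col (burau_gen n q1 q2 i) c =
    (if c = i then (q1 + q2) \<cdot>\<^sub>v unit_vec n i + q1 \<cdot>\<^sub>v unit_vec n (i + 1)
     else if c = i + 1 then - q2 \<cdot>\<^sub>v unit_vec n i
     else q1 \<cdot>\<^sub>v unit_vec n c)"
  using assms by (intro eq_vecI) (auto simp: burau_gen_def unit_vec_def)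

lemma row_burau_gen:
  assumes "i + 1 < n" and "r < n"
  shows "row (burau_gen n q1 q2 i) r =
    (if r = i then (q1 + q2) \<cdot>\<^sub>v unit_vec n i - q2 \<cdot>\<^sub>v unit_vec n (i + 1)
     else if r = i + 1 then q1 \<cdot>\<^sub>v unit_vec n i
     else q1 \<cdot>\<^sub>v unit_vec n r)"
  using assms by (intro eq_vecI) (auto simp: burau_gen_def unit_vec_def)

lemma index_mult_burau_gen:
  assumes "A \<in> carrier_mat n n" and "i + 1 < n" and "r < n" and "c < n"
  shows "(A * burau_gen n q1 q2 i) $$ (r, c) =
    (if c = i then (q1 + q2) * A $$ (r, i) + q1 * A $$ (r, i + 1)
     else if c = i + 1 then - q2 * A $$ (r, i)
     else q1 * A $$ (r, c))"
proof -
  have "(A * burau_gen n q1 q2 i) $$ (r, c) = row A r \<bullet> col (burau_gen n q1 q2 i) c"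
    using assms by simp
  moreover have "row A r \<in> carrier_vec n"
    using assms by simp
  ultimately show ?thesis
    using assms by (auto simp: col_burau_gen scalar_prod_add_distrib[of _ n])
qed

lemma index_burau_gen_mult:
  assumes "A \<in> carrier_mat n n" and "i + 1 < n" and "r < n" and "c < n"
  shows "(burau_gen n q1 q2 i * A) $$ (r, c) =
    (if r = i then (q1 + q2) * A $$ (i, c) - q2 * A $$ (i + 1, c)
     else if r = i + 1 then q1 * A $$ (i, c)
     else q1 * A $$ (r, c))"
proof -
  have "(burau_gen n q1 q2 i * A) $$ (r, c) = row (burau_gen n q1 q2 i) r \<bullet> col A c"
    using assms by simp
  moreover have "col A c \<in> carrier_vec n"
    using assms by simp
  ultimately show ?thesis
    using assms by (auto simp: row_burau_gen add_scalar_prod_distrib[of _ n] minus_scalar_prod_distrib[of _ n])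
qed

lemma End_Bn_carrier: "A \<in> End_Bn n q1 q2 \<Longrightarrow> A \<in> carrier_mat n n"
  by (simp add: End_Bn_def)

lemma End_Bn_index_eq:
  assumes "A \<in> End_Bn n q1 q2" and "i + 1 < n" and "r < n" and "c < n"
  shows "(if c = i then (q1 + q2) * A $$ (r, i) + q1 * A $$ (r, i + 1)
          else if c = i + 1 then - q2 * A $$ (r, i)
          else q1 * A $$ (r, c)) =
         (if r = i then (q1 + q2) * A $$ (i, c) - q2 * A $$ (i + 1, c)
          else if r = i + 1 then q1 * A $$ (i, c)
          else q1 * A $$ (r, c))"
proof -
  have A: "A \<in> carrier_mat n n"
    using assms(1) by (rule End_Bn_carrier)
  have "A * burau_gen n q1 q2 i = burau_gen n q1 q2 i * A"
    using assms(1,2) by (simp add: End_Bn_def)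
  then have "(A * burau_gen n q1 q2 i) $$ (r, c) = (burau_gen n q1 q2 i * A) $$ (r, c)"
    by simp
  then show ?thesis
    unfolding index_mult_burau_gen[OF A assms(2-4)] index_burau_gen_mult[OF A assms(2-4)] .
qed

lemma End_Bn_index_row_step:
  assumes "A \<in> End_Bn n q1 q2" and "q1 \<noteq> 0" and "i + 1 < n" and "r < n"
    and "r \<noteq> i" and "r \<noteq> i + 1"
  shows "A $$ (r, i + 1) = (- q2 / q1) * A $$ (r, i)"
  using End_Bn_index_eq[OF assms(1,3,4), of "i + 1"] assms by (simp add: field_simps)

lemma End_Bn_index_col_step:
  assumes "A \<in> End_Bn n q1 q2" and "q1 \<noteq> 0" and "i + 1 < n" and "c < n"
    and "c \<noteq> i" and "c \<noteq> i + 1"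
  shows "A $$ (i + 1, c) = A $$ (i, c)"
  using End_Bn_index_eq[OF assms(1,3) _ assms(4), of "i + 1"] assms by simp

lemma End_Bn_index_superdiag:
  assumes "A \<in> End_Bn n q1 q2" and "q1 \<noteq> 0" and "i + 1 < n"
  shows "A $$ (i, i + 1) = (- q2 / q1) * A $$ (i + 1, i)"
  using End_Bn_index_eq[OF assms(1,3), of "i + 1" "i + 1"] assms by (simp add: field_simps)

lemma End_Bn_index_diag_step:
  assumes "A \<in> End_Bn n q1 q2" and "i + 1 < n"
  shows "q2 * A $$ (i + 1, i + 1) = (q1 + q2) * A $$ (i, i + 1) + q2 * A $$ (i, i)"
  using End_Bn_index_eq[OF assms, of i "i + 1"] assms by (simp add: algebra_simps)

lemma End_Bn_index_col_0:
  assumes "A \<in> End_Bn n q1 q2" and "q1 \<noteq> 0" and "0 < r" and "r < n"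
  shows "A $$ (r, 0) = A $$ (1, 0)"
  using assms(3,4)
proof (induction r)
  case (Suc r)
  then show ?case
    using End_Bn_index_col_step[OF assms(1,2), of r 0] by (cases r) auto
qed simp

lemma End_Bn_index_off_diag:
  assumes "A \<in> End_Bn n q1 q2" and "q1 \<noteq> 0" and "r < n" and "c < n" and "r \<noteq> c"
  shows "A $$ (r, c) = A $$ (1, 0) * (- q2 / q1) ^ c"
  using assms(3-5)
proof (induction c arbitrary: r)
  case 0
  then show ?case
    using End_Bn_index_col_0[OF assms(1,2), of r] by simp
next
  case (Suc c)
  show ?case
  proof (cases "r = c")
    case True
    then show ?thesis
      using End_Bn_index_superdiag[OF assms(1,2), of c] Suc.IH[of "Suc c"] Suc.prems by simp
  next
    case False
    then show ?thesis
      using End_Bn_index_row_step[OF assms(1,2), of c r] Suc.IH[of r] Suc.prems by simp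
  qed
qed

lemma End_Bn_index_diag:
  assumes "A \<in> End_Bn n q1 q2" and "q1 \<noteq> 0" and "q2 \<noteq> 0" and "c < n"
  shows "A $$ (c, c) = A $$ (0, 0) - A $$ (1, 0) + A $$ (1, 0) * (- q2 / q1) ^ c"
proof -
  define a b q where "a = A $$ (0, 0) - A $$ (1, 0)" and "b = A $$ (1, 0)" and "q = - q2 / q1"
  have q: "q1 * q + q2 = 0"
    using assms(2) by (simp add: q_def)
  have "A $$ (c, c) = a + b * q ^ c"
    using assms(4)
  proof (induction c)
    case 0
    show ?case
      by (simp add: a_def b_def)
  next
    case (Suc c)
    have "q2 * A $$ (Suc c, Suc c) = (q1 + q2) * (b * q ^ Suc c) + q2 * (a + b * q ^ c)"
      using End_Bn_index_diag_step[OF assms(1), of c]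
        End_Bn_index_off_diag[OF assms(1,2), of c "Suc c"] Suc
      by (simp add: b_def q_def)
    also have "\<dots> = q2 * (a + b * q ^ Suc c) + b * q ^ c * (q1 * q + q2)"
      by (simp add: algebra_simps)
    also have "\<dots> = q2 * (a + b * q ^ Suc c)"
      by (simp add: q)
    finally show ?case
      using assms(3) by simp
  qed
  then show ?thesis
    by (simp add: a_def b_def q_def)
qed

text \<open>For n = 1 the entry A $$ (1, 0) is an unspecified junk value; it cancels because
  P_mat 1 q is the identity.\<close>

lemma End_Bn_eq_comb_P_mat:
  assumes "A \<in> End_Bn n q1 q2" and "q1 \<noteq> 0" and "q2 \<noteq> 0"
  shows "A = (A $$ (0, 0) - A $$ (1, 0)) \<cdot>\<^sub>m 1\<^sub>m n + A $$ (1, 0) \<cdot>\<^sub>m P_mat n (- q2 / q1)"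
    (is "A = ?M")
proof (rule eq_matI)
  fix r c
  assume "r < dim_row ?M" and "c < dim_col ?M"
  then have r: "r < n" and c: "c < n"
    by simp_all
  show "A $$ (r, c) = ?M $$ (r, c)"
  proof (cases "r = c")
    case True
    then show ?thesis
      using End_Bn_index_diag[OF assms c] r c by (simp add: P_mat_def)
  next
    case False
    then show ?thesis
      using End_Bn_index_off_diag[OF assms(1,2) r c] r c by (simp add: P_mat_def)
  qed
qed (use carrier_matD[OF End_Bn_carrier[OF assms(1)]] in simp_all)

lemma one_mat_in_End_Bn: "1\<^sub>m n \<in> End_Bn n q1 q2"
  by (simp add: End_Bn_def)

lemma burau_gen_mult_P_mat:
  assumes "i + 1 < n"
  shows "burau_gen n q1 q2 i * P_mat n q = q1 \<cdot>\<^sub>m P_mat n q"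
proof (rule eq_matI)
  fix r c
  assume "r < dim_row (q1 \<cdot>\<^sub>m P_mat n q)" and "c < dim_col (q1 \<cdot>\<^sub>m P_mat n q)"
  then have r: "r < n" and c: "c < n"
    by simp_all
  have P: "P_mat n q $$ (k, c) = q ^ c" if "k < n" for k
    using c that by (simp add: P_mat_def)
  show "(burau_gen n q1 q2 i * P_mat n q) $$ (r, c) = (q1 \<cdot>\<^sub>m P_mat n q) $$ (r, c)"
    unfolding index_burau_gen_mult[OF P_mat_carrier assms r c]
    using assms r c by (simp add: P ring_distribs)
qed simp_all

lemma P_mat_mult_burau_gen:
  assumes "i + 1 < n" and "q1 * q = - q2"
  shows "P_mat n q * burau_gen n q1 q2 i = q1 \<cdot>\<^sub>m P_mat n q"
proof (rule eq_matI)
  fix r c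
  assume "r < dim_row (q1 \<cdot>\<^sub>m P_mat n q)" and "c < dim_col (q1 \<cdot>\<^sub>m P_mat n q)"
  then have r: "r < n" and c: "c < n"
    by simp_all
  have P: "P_mat n q $$ (r, k) = q ^ k" if "k < n" for k
    using r that by (simp add: P_mat_def)
  have "q1 * q ^ (i + 1) = - q2 * q ^ i"
    using assms(2) by (simp add: mult.assoc[symmetric])
  then show "(P_mat n q * burau_gen n q1 q2 i) $$ (r, c) = (q1 \<cdot>\<^sub>m P_mat n q) $$ (r, c)"
    unfolding index_mult_burau_gen[OF P_mat_carrier assms(1) r c]
    using assms(1) r c by (auto simp: P distrib_right)
qed simp_all

lemma P_mat_in_End_Bn:
  assumes "q1 \<noteq> 0"
  shows "P_mat n (- q2 / q1) \<in> End_Bn n q1 q2"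
proof -
  have "q1 * (- q2 / q1) = - q2"
    using assms by simp
  then show ?thesis
    unfolding End_Bn_def
    by (simp add: less_diff_conv burau_gen_mult_P_mat P_mat_mult_burau_gen)
qed

lemma End_Bn_add:
  assumes "A \<in> End_Bn n q1 q2" and "B \<in> End_Bn n q1 q2"
  shows "A + B \<in> End_Bn n q1 q2"
proof -
  have A: "A \<in> carrier_mat n n" and B: "B \<in> carrier_mat n n"
    using assms by (simp_all add: End_Bn_carrier)
  have "(A + B) * burau_gen n q1 q2 i = burau_gen n q1 q2 i * (A + B)" if "i < n - 1" for i
  proof -
    have "(A + B) * burau_gen n q1 q2 i = A * burau_gen n q1 q2 i + B * burau_gen n q1 q2 i"
      by (rule add_mult_distrib_mat[OF A B burau_gen_carrier])
    also have "\<dots> = burau_gen n q1 q2 i * A + burau_gen n q1 q2 i * B"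
      using assms that by (simp add: End_Bn_def)
    also have "\<dots> = burau_gen n q1 q2 i * (A + B)"
      by (rule mult_add_distrib_mat[OF burau_gen_carrier A B, symmetric])
    finally show ?thesis .
  qed
  with A B show ?thesis
    by (simp add: End_Bn_def)
qed

lemma End_Bn_smult:
  assumes "A \<in> End_Bn n q1 q2"
  shows "a \<cdot>\<^sub>m A \<in> End_Bn n q1 q2"
proof -
  have A: "A \<in> carrier_mat n n"
    using assms by (rule End_Bn_carrier)
  have "(a \<cdot>\<^sub>m A) * burau_gen n q1 q2 i = burau_gen n q1 q2 i * (a \<cdot>\<^sub>m A)" if "i < n - 1" for i
  proof -
    have "(a \<cdot>\<^sub>m A) * burau_gen n q1 q2 i = a \<cdot>\<^sub>m (A * burau_gen n q1 q2 i)"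
      by (rule mult_smult_assoc_mat[OF A burau_gen_carrier])
    also have "\<dots> = a \<cdot>\<^sub>m (burau_gen n q1 q2 i * A)"
      using assms that by (simp add: End_Bn_def)
    also have "\<dots> = burau_gen n q1 q2 i * (a \<cdot>\<^sub>m A)"
      by (rule mult_smult_distrib[OF burau_gen_carrier A, symmetric])
    finally show ?thesis .
  qed
  with A show ?thesis
    by (simp add: End_Bn_def)
qed

theorem theorem4p1:
  fixes n :: nat and q1 q2 :: complex
  assumes "n \<ge> 2" and "q1 * q2 \<noteq> 0"
    and "(\<Sum>k<n. (- q2 / q1) ^ k) \<noteq> 0"
  shows "End_Bn n q1 q2 =
    {a \<cdot>\<^sub>m 1\<^sub>m n + b \<cdot>\<^sub>m P_mat n (- q2 / q1) | a b :: complex. True}"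
proof
  have "q1 \<noteq> 0" and "q2 \<noteq> 0"
    using assms(2) by auto
  then show "End_Bn n q1 q2 \<subseteq> {a \<cdot>\<^sub>m 1\<^sub>m n + b \<cdot>\<^sub>m P_mat n (- q2 / q1) | a b. True}"
    using End_Bn_eq_comb_P_mat by blast
  have "a \<cdot>\<^sub>m 1\<^sub>m n + b \<cdot>\<^sub>m P_mat n (- q2 / q1) \<in> End_Bn n q1 q2" for a b
    using \<open>q1 \<noteq> 0\<close> by (intro End_Bn_add End_Bn_smult one_mat_in_End_Bn P_mat_in_End_Bn)
  then show "{a \<cdot>\<^sub>m 1\<^sub>m n + b \<cdot>\<^sub>m P_mat n (- q2 / q1) | a b. True} \<subseteq> End_Bn n q1 q2"
    by blast
qed

end
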